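(* Fix $c>0$, constants $u_{X_i}\ge 0$ ($i=1,\dots,d$), $0\le a_i\le b_i\le 1$ and boxes $B_i=\{x\in\mathcal{D}_0:\underline{x}_{ji}\le x_j\le\bar x_{ji},\,j=1,\dots,d\}$ ($i=1,\dots,n$, with $x_{j0}\le\underline{x}_{ji}\le\bar x_{ji}\le\infty$), and a Lebesgue measurable set $S\subset\mathcal{D}_0$. Problem (A): maximize $c\int_0^\infty \frac{\lambda_d(S\cap\bar C_s)}{\lambda_d(\bar C_s)}g(s)\,ds$ over nonnegative measurable $f$ on $\mathcal{D}_0$ with $\int_{\mathcal{D}_0}f=c$, $f(x')\ge f(x)$ whenever $x\ge x'\ge x_0$, and $f(x)=\limsup_{y\to x,\,y\in\mathcal{D}_0^\circ}f(y)$ for $x\in\partial\mathcal{D}_0$, subject to $\int_0^\infty\frac{\lambda_{d-1}(\bar C_{s,i})}{\lambda_d(\bar C_s)}g(s)\,ds\le u_{X_i}/c$ for $i=1,\dots,d$ and $a_i\le\int_0^\infty\frac{\lambda_d(B_i\cap\bar C_s)}{\lambda_d(\bar C_s)}g(s)\,ds\le b_i$ for $i=1,\dots,n$, where $C_s=\{x\in\mathcal{D}_0:f(x)\ge s\}$, $\bar C_s$ is its closure and $g(s)=\lambda_d(\bar C_s)/c$. Problem (B): maximize $c\int_0^\infty\frac{\lambda_d(S\cap R_s)}{\lambda_d(R_s)}dG(s)$ over families $\{R_s\subset\mathcal{D}_0: s>0\}$ of closed OU sets about $x_0$ with $\lambda_d(R_s)\in(0,\infty)$ and $\lambda_{d-1}(R_{s,i})\in(0,\infty)$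 for all $s>0$ and $i$, and probability distributions $G$ on $(0,\infty)$, subject to $\int_0^\infty\frac{\lambda_{d-1}(R_{s,i})}{\lambda_d(R_s)}dG(s)\le u_{X_i}/c$ ($i=1,\dots,d$), $a_i\le\int_0^\infty\frac{\lambda_d(B_i\cap R_s)}{\lambda_d(R_s)}dG(s)\le b_i$ ($i=1,\dots,n$), and all integrands being measurable in $s$. Then the optimal value of (B) is not less than the optimal value of (A).
   Context: $\mathcal{D}_0=\{x\in\mathbb{R}^d:x\ge x_0\}$ (componentwise), $x_0=(x_{10},\dots,x_{d0})$; $\mathcal{D}_0^\circ$ and $\partial\mathcal{D}_0$ are its interior and boundary. A set $K\subset\mathcal{D}_0$ is OU about $x_0$ if $x\in K$ and $x\ge x'\ge x_0$ imply $x'\in K$. $\lambda_d,\lambda_{d-1}$ are Lebesgue measures on $\mathbb{R}^d,\mathbb{R}^{d-1}$. For $K\subset\mathcal{D}_0$, the slice $K_i=\{(x_1,\dots,x_{i-1},x_{i+1},\dots,x_d):(x_1,\dots,x_{i-1},x_{i0},x_{i+1},\dots,x_d)\in K\}$. Conventions: $\lambda_{d-1}(K_i)/\lambda_d(K)=0$ if $K=\emptyset$, and $\lambda_d(K'\cap K)/\lambda_d(K)=0$ for any measurable $K'$ if $\lambda_d(K)=0$. *)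

theory Defs
  imports "HOL-Probability.Probability"
begin

text \<open>Points of R^d are represented as extensional functions nat => real
  supported on the index set {..<d} (coordinates 0..d-1 correspond to 1..d).
  R^(d-1) for the slice K_i is represented on the index set {..<d} - {i}.\<close>

definition Leb :: "nat set \<Rightarrow> (nat \<Rightarrow> real) measure" where
  "Leb I = completion (PiM I (\<lambda>_. lborel))"

abbreviation lam_d :: "nat \<Rightarrow> (nat \<Rightarrow> real) measure" where
  "lam_d d \<equiv> Leb {..<d}"

abbreviation lam_dm1 :: "nat \<Rightarrow> nat \<Rightarrow> (nat \<Rightarrow> real) measure" where
  "lam_dm1 d i \<equiv> Leb ({..<d} - {i})"

definition D0 :: "nat \<Rightarrow> (nat \<Rightarrow> real) \<Rightarrow> (nat \<Rightarrow> real) set" where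
  "D0 d x0 = {x \<in> PiE {..<d} (\<lambda>_. UNIV). \<forall>j<d. x0 j \<le> x j}"

definition D0_int :: "nat \<Rightarrow> (nat \<Rightarrow> real) \<Rightarrow> (nat \<Rightarrow> real) set" where
  "D0_int d x0 = {x \<in> PiE {..<d} (\<lambda>_. UNIV). \<forall>j<d. x0 j < x j}"

definition D0_bd :: "nat \<Rightarrow> (nat \<Rightarrow> real) \<Rightarrow> (nat \<Rightarrow> real) set" where
  "D0_bd d x0 = D0 d x0 - D0_int d x0"

definition OU :: "nat \<Rightarrow> (nat \<Rightarrow> real) \<Rightarrow> (nat \<Rightarrow> real) set \<Rightarrow> bool" where
  "OU d x0 K \<longleftrightarrow> K \<subseteq> D0 d x0 \<and>
     (\<forall>x \<in> K. \<forall>x' \<in> D0 d x0. (\<forall>j<d. x' j \<le> x j) \<longrightarrow> x' \<in> K)"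

definition slice :: "nat \<Rightarrow> (nat \<Rightarrow> real) \<Rightarrow> (nat \<Rightarrow> real) set \<Rightarrow> nat \<Rightarrow> (nat \<Rightarrow> real) set" where
  "slice d x0 K i = {y \<in> PiE ({..<d} - {i}) (\<lambda>_. UNIV). y(i := x0 i) \<in> K}"

definition Bx :: "nat \<Rightarrow> (nat \<Rightarrow> real) \<Rightarrow> (nat \<Rightarrow> real) \<Rightarrow> (nat \<Rightarrow> ereal) \<Rightarrow> (nat \<Rightarrow> real) set" where
  "Bx d x0 lo hi = {x \<in> D0 d x0. \<forall>j<d. lo j \<le> x j \<and> ereal (x j) \<le> hi j}"

definition Cbar :: "nat \<Rightarrow> (nat \<Rightarrow> real) \<Rightarrow> ((nat \<Rightarrow> real) \<Rightarrow> real) \<Rightarrow> real \<Rightarrow> (nat \<Rightarrow> real) set" where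
  "Cbar d x0 f s = closure {x \<in> D0 d x0. s \<le> f x}"

definition feasA :: "nat \<Rightarrow> (nat \<Rightarrow> real) \<Rightarrow> real \<Rightarrow> (nat \<Rightarrow> real) \<Rightarrow> nat \<Rightarrow> (nat \<Rightarrow> nat \<Rightarrow> real) \<Rightarrow> (nat \<Rightarrow> nat \<Rightarrow> ereal) \<Rightarrow> (nat \<Rightarrow> real) \<Rightarrow> (nat \<Rightarrow> real) \<Rightarrow> ((nat \<Rightarrow> real) \<Rightarrow> real) \<Rightarrow> bool" where
  "feasA d x0 c u n lo hi a b f \<longleftrightarrow>
     set_borel_measurable (lam_d d) (D0 d x0) f \<and>
     (\<forall>x \<in> D0 d x0. 0 \<le> f x) \<and>
     (\<integral>\<^sup>+ x \<in> D0 d x0. ennreal (f x) \<partial>lam_d d) = ennreal c \<and>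
     (\<forall>x \<in> D0 d x0. \<forall>x' \<in> D0 d x0. (\<forall>j<d. x' j \<le> x j) \<longrightarrow> f x \<le> f x') \<and>
     (\<forall>x \<in> D0_bd d x0. ereal (f x) = Limsup (at x within D0_int d x0) (\<lambda>y. ereal (f y))) \<and>
     (let g = (\<lambda>s. emeasure (lam_d d) (Cbar d x0 f s) / ennreal c) in
       (\<forall>i<d. (\<integral>\<^sup>+ s \<in> {0<..}. emeasure (lam_dm1 d i) (slice d x0 (Cbar d x0 f s) i)
                 / emeasure (lam_d d) (Cbar d x0 f s) * g s \<partial>lborel) \<le> ennreal (u i / c)) \<and>
       (\<forall>i<n. ennreal (a i) \<le> (\<integral>\<^sup>+ s \<in> {0<..}. emeasure (lam_d d) (Bx d x0 (lo i) (hi i) \<inter> Cbar d x0 f s)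
                 / emeasure (lam_d d) (Cbar d x0 f s) * g s \<partial>lborel) \<and>
              (\<integral>\<^sup>+ s \<in> {0<..}. emeasure (lam_d d) (Bx d x0 (lo i) (hi i) \<inter> Cbar d x0 f s)
                 / emeasure (lam_d d) (Cbar d x0 f s) * g s \<partial>lborel) \<le> ennreal (b i)))"

definition objA :: "nat \<Rightarrow> (nat \<Rightarrow> real) \<Rightarrow> real \<Rightarrow> (nat \<Rightarrow> real) set \<Rightarrow> ((nat \<Rightarrow> real) \<Rightarrow> real) \<Rightarrow> ennreal" where
  "objA d x0 c S f = ennreal c * (\<integral>\<^sup>+ s \<in> {0<..}. emeasure (lam_d d) (S \<inter> Cbar d x0 f s)
      / emeasure (lam_d d) (Cbar d x0 f s) * (emeasure (lam_d d) (Cbar d x0 f s) / ennreal c) \<partial>lborel)"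

definition feasB :: "nat \<Rightarrow> (nat \<Rightarrow> real) \<Rightarrow> real \<Rightarrow> (nat \<Rightarrow> real) \<Rightarrow> nat \<Rightarrow> (nat \<Rightarrow> nat \<Rightarrow> real) \<Rightarrow> (nat \<Rightarrow> nat \<Rightarrow> ereal) \<Rightarrow> (nat \<Rightarrow> real) \<Rightarrow> (nat \<Rightarrow> real) \<Rightarrow> (nat \<Rightarrow> real) set \<Rightarrow> (real \<Rightarrow> (nat \<Rightarrow> real) set) \<Rightarrow> real measure \<Rightarrow> bool" where
  "feasB d x0 c u n lo hi a b S R G \<longleftrightarrow>
     prob_space G \<and> space G = {0<..} \<and> sets G = sets (restrict_space borel {0<..}) \<and>
     (\<forall>s>0. closed (R s) \<and> OU d x0 (R s) \<and>
        0 < emeasure (lam_d d) (R s) \<and> emeasure (lam_d d) (R s) < \<infinity> \<and>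
        (\<forall>i<d. 0 < emeasure (lam_dm1 d i) (slice d x0 (R s) i) \<and>
               emeasure (lam_dm1 d i) (slice d x0 (R s) i) < \<infinity>)) \<and>
     (\<lambda>s. emeasure (lam_d d) (S \<inter> R s) / emeasure (lam_d d) (R s)) \<in> borel_measurable G \<and>
     (\<forall>i<d. (\<lambda>s. emeasure (lam_dm1 d i) (slice d x0 (R s) i) / emeasure (lam_d d) (R s))
              \<in> borel_measurable G) \<and>
     (\<forall>i<n. (\<lambda>s. emeasure (lam_d d) (Bx d x0 (lo i) (hi i) \<inter> R s) / emeasure (lam_d d) (R s))
              \<in> borel_measurable G) \<and>
     (\<forall>i<d. (\<integral>\<^sup>+ s. emeasure (lam_dm1 d i) (slice d x0 (R s) i) / emeasure (lam_d d) (R s) \<partial>G)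
              \<le> ennreal (u i / c)) \<and>
     (\<forall>i<n. ennreal (a i) \<le> (\<integral>\<^sup>+ s. emeasure (lam_d d) (Bx d x0 (lo i) (hi i) \<inter> R s) / emeasure (lam_d d) (R s) \<partial>G) \<and>
            (\<integral>\<^sup>+ s. emeasure (lam_d d) (Bx d x0 (lo i) (hi i) \<inter> R s) / emeasure (lam_d d) (R s) \<partial>G) \<le> ennreal (b i))"

definition objB :: "nat \<Rightarrow> real \<Rightarrow> (nat \<Rightarrow> real) set \<Rightarrow> (real \<Rightarrow> (nat \<Rightarrow> real) set) \<Rightarrow> real measure \<Rightarrow> ennreal" where
  "objB d c S R G = ennreal c * (\<integral>\<^sup>+ s. emeasure (lam_d d) (S \<inter> R s) / emeasure (lam_d d) (R s) \<partial>G)"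

text \<open>Optimal values (suprema, in the extended reals; empty feasible set gives -\<infinity>)\<close>
definition optA :: "nat \<Rightarrow> (nat \<Rightarrow> real) \<Rightarrow> real \<Rightarrow> (nat \<Rightarrow> real) \<Rightarrow> nat \<Rightarrow> (nat \<Rightarrow> nat \<Rightarrow> real) \<Rightarrow> (nat \<Rightarrow> nat \<Rightarrow> ereal) \<Rightarrow> (nat \<Rightarrow> real) \<Rightarrow> (nat \<Rightarrow> real) \<Rightarrow> (nat \<Rightarrow> real) set \<Rightarrow> ereal" where
  "optA d x0 c u n lo hi a b S =
     Sup {enn2ereal (objA d x0 c S f) | f. feasA d x0 c u n lo hi a b f}"

definition optB :: "nat \<Rightarrow> (nat \<Rightarrow> real) \<Rightarrow> real \<Rightarrow> (nat \<Rightarrow> real) \<Rightarrow> nat \<Rightarrow> (nat \<Rightarrow> nat \<Rightarrow> real) \<Rightarrow> (nat \<Rightarrow> nat \<Rightarrow> ereal) \<Rightarrow> (nat \<Rightarrow> real) \<Rightarrow> (nat \<Rightarrow> real) \<Rightarrow> (nat \<Rightarrow> real) set \<Rightarrow> ereal" where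
  "optB d x0 c u n lo hi a b S =
     Sup {enn2ereal (objB d c S R G) | R G. feasB d x0 c u n lo hi a b S R G}"

end

theory Submission
  imports Defs
begin

text \<open>Given a feasible density f of problem (A), take for G the distribution on (0,\<infinity>) with
  density g(s) = \<lambda>(closure C(s))/c and for R(s) the closed OU set closure C(s). By the layer-cake
  formula the integral of \<lambda>(C(s)) over s > 0 is the integral of f, namely c, and closing an OU
  set does not change its measure (apart from the null set \<partial>D0, its closure is pushed into the
  set by small translations towards x0), so G is a probability distribution. Every integral of
  problem (A) is then literally the corresponding integral of problem (B). The only defect is that
  R(s) may violate the finiteness and positivity requirements of (B); but the constraints of (A)
  force this to happen only on a G-null set of levels s, where R(s) can be replaced by the unit
  cube at x0 without changing any integral.\<close>

section \<open>Lebesgue measure on coordinate space\<close>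

lemma measurable_id_PiM_lborel_UNIV:
  "(\<lambda>x. x) \<in> PiM I (\<lambda>_. lborel) \<rightarrow>\<^sub>M PiM UNIV (\<lambda>_. borel :: real measure)"
proof -
  have "(\<lambda>\<omega> i. \<omega> i) \<in> PiM I (\<lambda>_. lborel) \<rightarrow>\<^sub>M PiM UNIV (\<lambda>_. borel :: real measure)"
  proof (rule measurable_PiM_single')
    fix i :: 'a
    show "(\<lambda>\<omega>. \<omega> i) \<in> PiM I (\<lambda>_. lborel) \<rightarrow>\<^sub>M (borel :: real measure)"
    proof (cases "i \<in> I")
      case True
      then show ?thesis using measurable_component_singleton[OF True, of "\<lambda>_. lborel"]
        by (simp add: measurable_cong_sets[OF refl sets_lborel])
    next
      case False
      have "(\<lambda>\<omega>. undefined :: real) \<in> PiM I (\<lambda>_. lborel) \<rightarrow>\<^sub>M borel" by simp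
      then show ?thesis
        by (rule measurable_cong[THEN iffD1, rotated])
          (use False in \<open>auto simp: space_PiM PiE_def extensional_def\<close>)
    qed
  qed (auto simp: space_PiM)
  then show ?thesis by simp
qed

lemma sets_Leb_borel:
  assumes "A \<in> sets (borel :: (nat \<Rightarrow> real) measure)" and "A \<subseteq> PiE I (\<lambda>_. UNIV)"
  shows "A \<in> sets (Leb I)"
proof -
  have "A \<in> sets (PiM UNIV (\<lambda>_. borel :: real measure))"
    using assms(1) sets_PiM_equal_borel by blast
  from measurable_sets[OF measurable_id_PiM_lborel_UNIV this, of I]
  have "A \<in> sets (PiM I (\<lambda>_. lborel))"
    using assms(2) by (simp add: space_PiM Int_absorb2)
  then show ?thesis by (simp add: Leb_def)
qed

lemma sets_Leb_closed: "closed A \<Longrightarrow> A \<subseteq> PiE I (\<lambda>_. UNIV) \<Longrightarrow> A \<in> sets (Leb I)"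
  by (rule sets_Leb_borel[OF borel_closed])

lemma space_Leb: "space (Leb I) = PiE I (\<lambda>_. UNIV)"
  by (simp add: Leb_def space_PiM)

interpretation lborel_product: product_sigma_finite "\<lambda>_::nat. lborel :: real measure"
  by (simp add: product_sigma_finite_def lborel.sigma_finite_measure_axioms)

lemma sigma_finite_measure_completion:
  assumes "sigma_finite_measure M"
  shows "sigma_finite_measure (completion M)"
proof
  from sigma_finite_measure.sigma_finite_countable[OF assms] obtain A where
    "countable A" "A \<subseteq> sets M" "\<Union>A = space M" "\<forall>a\<in>A. emeasure M a \<noteq> \<infinity>" by blast
  then show "\<exists>A. countable A \<and> A \<subseteq> sets (completion M) \<and> \<Union>A = space (completion M) \<and>
      (\<forall>a\<in>A. emeasure (completion M) a \<noteq> \<infinity>)"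
    by (intro exI[of _ A]) auto
qed

lemma sigma_finite_measure_Leb: "finite I \<Longrightarrow> sigma_finite_measure (Leb I)"
  unfolding Leb_def by (intro sigma_finite_measure_completion lborel_product.sigma_finite)

lemma emeasure_Leb_box:
  assumes "finite I" and "\<And>j. j \<in> I \<Longrightarrow> l j \<le> h j"
  shows "emeasure (Leb I) (PiE I (\<lambda>j. {l j..h j})) = (\<Prod>j\<in>I. ennreal (h j - l j))"
proof -
  have "PiE I (\<lambda>j. {l j..h j}) \<in> sets (PiM I (\<lambda>_. lborel :: real measure))"
    using assms by (intro sets_PiM_I_finite) auto
  moreover have "emeasure (PiM I (\<lambda>_. lborel)) (PiE I (\<lambda>j. {l j..h j}))
      = (\<Prod>j\<in>I. emeasure lborel {l j..h j})"
    using assms by (intro lborel_product.emeasure_PiM) auto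
  ultimately show ?thesis
    using assms by (simp add: Leb_def)
qed

lemma null_sets_PiM_lborel_hyperplane:
  fixes I :: "nat set"
  assumes "j \<in> I" and "finite I"
  shows "PiE I (\<lambda>k. if k = j then {t} else UNIV) \<in> null_sets (PiM I (\<lambda>_. lborel :: real measure))"
proof -
  have "PiE I (\<lambda>k. if k = j then {t} else UNIV) \<in> sets (PiM I (\<lambda>_. lborel :: real measure))"
    using assms by (intro sets_PiM_I_finite) auto
  moreover have "emeasure (PiM I (\<lambda>_. lborel :: real measure)) (PiE I (\<lambda>k. if k = j then {t} else UNIV))
      = (\<Prod>k\<in>I. emeasure lborel (if k = j then {t} else UNIV))"
    using assms by (intro lborel_product.emeasure_PiM) auto
  moreover have "(\<Prod>k\<in>I. emeasure lborel (if k = j then {t} else UNIV)) = 0"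
    using assms by (intro prod_zero) auto
  ultimately show ?thesis by auto
qed

lemma distr_PiM_lborel_translate:
  fixes I :: "nat set"
  assumes "finite I"
  shows "distr (PiM I (\<lambda>_. lborel)) (PiM I (\<lambda>_. lborel)) (\<lambda>x. restrict (\<lambda>j. x j + e j) I)
    = PiM I (\<lambda>_. lborel :: real measure)"
proof (rule lborel_product.PiM_eqI[OF assms])
  let ?T = "\<lambda>x. restrict (\<lambda>j. x j + e j) I"
  have T: "?T \<in> PiM I (\<lambda>_. lborel) \<rightarrow>\<^sub>M PiM I (\<lambda>_. lborel :: real measure)"
    by measurable
  have shift: "(\<lambda>t::real. t + c) -` A \<in> sets borel" "emeasure lborel ((\<lambda>t. t + c) -` A) = emeasure lborel A"
    if "A \<in> sets borel" for A :: "real set" and c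
  proof -
    show "(\<lambda>t::real. t + c) -` A \<in> sets borel"
      using measurable_sets[of "\<lambda>t::real. t + c" borel borel A] that by simp
    have "emeasure lborel ((+) c -` A) = emeasure lborel A"
      using emeasure_distr[of "(+) c" lborel borel A] that by (simp add: lborel_distr_plus)
    moreover have "(\<lambda>t::real. t + c) = (+) c" by (auto simp: add.commute)
    ultimately show "emeasure lborel ((\<lambda>t. t + c) -` A) = emeasure lborel A" by simp
  qed
  show "sets (distr (PiM I (\<lambda>_. lborel)) (PiM I (\<lambda>_. lborel)) ?T) = sets (PiM I (\<lambda>_. lborel))"
    by simp
  fix A :: "nat \<Rightarrow> real set" assume A: "\<And>i. i \<in> I \<Longrightarrow> A i \<in> sets lborel"
  have "?T -` PiE I A \<inter> space (PiM I (\<lambda>_. lborel)) = PiE I (\<lambda>j. (\<lambda>t. t + e j) -` A j)"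
    by (auto simp: space_PiM PiE_def Pi_def extensional_def)
  then have "emeasure (distr (PiM I (\<lambda>_. lborel)) (PiM I (\<lambda>_. lborel)) ?T) (PiE I A)
      = emeasure (PiM I (\<lambda>_. lborel)) (PiE I (\<lambda>j. (\<lambda>t. t + e j) -` A j))"
    using A assms shift by (subst emeasure_distr[OF T]) (auto intro!: sets_PiM_I_finite)
  also have "\<dots> = (\<Prod>j\<in>I. emeasure lborel ((\<lambda>t. t + e j) -` A j))"
    using A assms shift by (intro lborel_product.emeasure_PiM) auto
  also have "\<dots> = (\<Prod>j\<in>I. emeasure lborel (A j))"
    using A shift by (intro prod.cong) auto
  finally show "emeasure (distr (PiM I (\<lambda>_. lborel)) (PiM I (\<lambda>_. lborel)) ?T) (PiE I A)
      = (\<Prod>j\<in>I. emeasure lborel (A j))" .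
qed

lemma emeasure_Leb_le_translate:
  assumes "finite I" and A: "A \<in> sets (Leb I)" and B: "B \<in> sets (Leb I)"
    and into: "\<And>x. x \<in> A \<Longrightarrow> restrict (\<lambda>j. x j + e j) I \<in> B"
  shows "emeasure (Leb I) A \<le> emeasure (Leb I) B"
proof -
  let ?L = "PiM I (\<lambda>_. lborel :: real measure)"
  let ?T = "\<lambda>x. restrict (\<lambda>j. x j + e j) I"
  have T: "?T \<in> ?L \<rightarrow>\<^sub>M ?L" by measurable
  obtain B' where B': "B' \<in> sets ?L" "B \<subseteq> B'" "emeasure (Leb I) B = emeasure ?L B'"
    using completion_upper[of B ?L] B by (auto simp: Leb_def)
  have "A \<subseteq> ?T -` B' \<inter> space ?L"
    using into B'(2) sets.sets_into_space[OF A] by (auto simp: Leb_def)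
  then have "emeasure (Leb I) A \<le> emeasure (Leb I) (?T -` B' \<inter> space ?L)"
    using measurable_sets[OF T B'(1)] by (intro emeasure_mono) (auto simp: Leb_def)
  also have "\<dots> = emeasure (distr ?L ?L ?T) B'"
    using measurable_sets[OF T B'(1)] B'(1) by (simp add: Leb_def emeasure_distr[OF T])
  also have "\<dots> = emeasure (Leb I) B"
    using B' by (simp add: distr_PiM_lborel_translate[OF assms(1)])
  finally show ?thesis .
qed

section \<open>The orthant and its OU subsets\<close>

lemma closed_PiE_UNIV: "closed (PiE I (\<lambda>_. UNIV) :: (nat \<Rightarrow> real) set)"
proof -
  have "PiE I (\<lambda>_. UNIV) = (\<Inter>j\<in>-I. {x :: nat \<Rightarrow> real. x j = undefined})"
    by (auto simp: PiE_def extensional_def)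
  moreover have "closed {x :: nat \<Rightarrow> real. x j = undefined}" for j
    by (intro closed_Collect_eq continuous_intros) simp
  ultimately show ?thesis by auto
qed

lemma closed_D0: "closed (D0 d x0)"
proof -
  have "D0 d x0 = PiE {..<d} (\<lambda>_. UNIV) \<inter> {x. \<forall>j<d. x0 j \<le> x j}"
    by (auto simp: D0_def)
  then show ?thesis
    by (simp only:) (intro closed_Int closed_PiE_UNIV closed_Collect_all closed_Collect_imp
        open_Collect_const closed_Collect_le continuous_on_product_coordinates continuous_intros)
qed

lemma D0_subset_PiE: "D0 d x0 \<subseteq> PiE {..<d} (\<lambda>_. UNIV)"
  by (auto simp: D0_def)

lemma sets_Leb_closed_subset_D0: "closed K \<Longrightarrow> K \<subseteq> D0 d x0 \<Longrightarrow> K \<in> sets (lam_d d)"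
  using D0_subset_PiE[of d x0] by (intro sets_Leb_closed) auto

lemma null_sets_D0_bd: "D0_bd d x0 \<in> null_sets (lam_d d)"
proof -
  let ?N = "\<Union>j<d. PiE {..<d} (\<lambda>k. if k = j then {x0 j} else UNIV)"
  have "?N \<in> null_sets (PiM {..<d} (\<lambda>_. lborel :: real measure))"
    by (intro null_sets_UN') (auto intro: null_sets_PiM_lborel_hyperplane)
  moreover have "D0_bd d x0 \<subseteq> ?N"
  proof
    fix x assume x: "x \<in> D0_bd d x0"
    then obtain j where "j < d" "x j = x0 j" by (force simp: D0_bd_def D0_def D0_int_def)
    with x show "x \<in> ?N" by (auto simp: D0_bd_def D0_def PiE_def Pi_def)
  qed
  ultimately show ?thesis unfolding Leb_def null_sets_completion_iff2 by blast
qed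

lemma OU_closure:
  assumes K: "OU d x0 K"
  shows "OU d x0 (closure K)"
proof -
  have cD: "closure K \<subseteq> D0 d x0"
    using K closure_minimal closed_D0 by (auto simp: OU_def)
  show ?thesis unfolding OU_def
  proof (intro conjI cD ballI impI)
    fix x x' assume x: "x \<in> closure K" and x': "x' \<in> D0 d x0" and le: "\<forall>j<d. x' j \<le> x j"
    text \<open>The coordinatewise minimum with x' is continuous and maps K into K.\<close>
    let ?m = "\<lambda>y::nat\<Rightarrow>real. restrict (\<lambda>j. min (y j) (x' j)) {..<d}"
    have cont: "continuous_on UNIV ?m"
    proof (rule continuous_on_coordinatewise_then_product)
      fix j show "continuous_on UNIV (\<lambda>y. ?m y j)"
        by (cases "j < d") (simp_all add: continuous_on_min)
    qed
    have "?m y \<in> K" if "y \<in> K" for y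
    proof -
      have "?m y \<in> D0 d x0" using that K x' by (auto simp: OU_def D0_def)
      then show ?thesis using K that by (auto simp: OU_def)
    qed
    then have "?m ` closure K \<subseteq> closure K"
      using closure_subset by (intro image_closure_subset continuous_on_subset[OF cont]) auto
    moreover have "?m x = x'"
      using le x' by (auto simp: D0_def PiE_def extensional_def fun_eq_iff)
    ultimately show "x' \<in> closure K" using x by force
  qed
qed

lemma OU_translate_closure_into:
  assumes K: "OU d x0 K" and x: "x \<in> closure K" and e: "0 < e"
    and inside: "\<forall>j<d. x0 j + e \<le> x j"
  shows "restrict (\<lambda>j. x j - e) {..<d} \<in> K"
proof -
  define U where "U = {z::nat\<Rightarrow>real. \<forall>j<d. x j - e < z j}"
  have "U = (\<Inter>j<d. {z. x j - e < z j})" by (auto simp: U_def)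
  then have "open U"
    by (simp only:) (intro open_INT finite_lessThan ballI open_Collect_less
        continuous_on_product_coordinates continuous_intros)
  moreover have "x \<in> U" using e by (simp add: U_def)
  ultimately have "U \<inter> K \<noteq> {}"
    using x open_Int_closure_eq_empty[of U K] by blast
  then obtain z where z: "z \<in> K" "\<forall>j<d. x j - e < z j" by (auto simp: U_def)
  have "restrict (\<lambda>j. x j - e) {..<d} \<in> D0 d x0" using inside by (simp add: D0_def le_diff_eq)
  moreover have "\<forall>j<d. restrict (\<lambda>j. x j - e) {..<d} j \<le> z j" using z(2) by (simp add: less_imp_le)
  ultimately show ?thesis using K z(1) unfolding OU_def by blast
qed

lemma D0_int_uniformly_inside:
  assumes "x \<in> D0_int d x0"
  obtains m :: nat where "\<forall>j<d. x0 j + 1 / real (Suc m) \<le> x j"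
proof -
  define \<delta> where "\<delta> = Min (insert 1 ((\<lambda>j. x j - x0 j) ` {..<d}))"
  have "0 < \<delta>" using assms by (auto simp: \<delta>_def D0_int_def)
  then obtain m where m: "1 / real (Suc m) < \<delta>"
    using reals_Archimedean by (auto simp: inverse_eq_divide)
  have "\<delta> \<le> x j - x0 j" if "j < d" for j using that by (auto simp: \<delta>_def)
  with m have "\<forall>j<d. x0 j + 1 / real (Suc m) \<le> x j" by force
  then show thesis by (rule that)
qed

text \<open>Points of closure K off the null set \<partial>D0 lie in one of the increasing sets A m, each of
  which is translated into K, so has measure at most \<lambda>(K).\<close>
lemma emeasure_closure_OU:
  assumes K: "OU d x0 K" "K \<in> sets (lam_d d)"
  shows "emeasure (lam_d d) (closure K) = emeasure (lam_d d) K"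
proof (rule antisym)
  have cD: "closure K \<subseteq> D0 d x0"
    using K closure_minimal closed_D0 by (auto simp: OU_def)
  then show "emeasure (lam_d d) K \<le> emeasure (lam_d d) (closure K)"
    by (intro emeasure_mono closure_subset sets_Leb_closed_subset_D0) auto
  define A where "A m = closure K \<inter> {x. \<forall>j<d. x0 j + 1 / real (Suc m) \<le> x j}" for m
  have closed_A: "closed (A m)" for m
    unfolding A_def
    by (intro closed_Int closed_closure closed_Collect_all closed_Collect_imp open_Collect_const
        closed_Collect_le continuous_on_product_coordinates continuous_intros)
  have A: "A m \<in> sets (lam_d d)" for m
    using closed_A cD by (intro sets_Leb_closed_subset_D0) (auto simp: A_def)
  have "emeasure (lam_d d) (A m) \<le> emeasure (lam_d d) K" for m
  proof (rule emeasure_Leb_le_translate[where e = "\<lambda>_. - (1 / real (Suc m))"])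
    fix x assume "x \<in> A m"
    then show "restrict (\<lambda>j. x j + - (1 / real (Suc m))) {..<d} \<in> K"
      using OU_translate_closure_into[OF K(1), of x "1 / real (Suc m)"] by (simp add: A_def)
  qed (use A K in auto)
  then have "(SUP m. emeasure (lam_d d) (A m)) \<le> emeasure (lam_d d) K"
    by (rule SUP_least)
  moreover have "incseq A"
  proof (rule incseq_SucI)
    fix m
    have "1 / real (Suc (Suc m)) \<le> 1 / real (Suc m)" by (simp add: frac_le)
    then show "A m \<subseteq> A (Suc m)" unfolding A_def by force
  qed
  then have "(SUP m. emeasure (lam_d d) (A m)) = emeasure (lam_d d) (\<Union>m. A m)"
    using A by (intro SUP_emeasure_incseq) auto
  moreover have "closure K \<subseteq> (\<Union>m. A m) \<union> D0_bd d x0"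
  proof
    fix x assume x: "x \<in> closure K"
    show "x \<in> (\<Union>m. A m) \<union> D0_bd d x0"
    proof (cases "x \<in> D0_int d x0")
      case True
      then obtain m where "\<forall>j<d. x0 j + 1 / real (Suc m) \<le> x j"
        by (rule D0_int_uniformly_inside)
      then show ?thesis using x by (auto simp: A_def)
    qed (use x cD in \<open>auto simp: D0_bd_def\<close>)
  qed
  then have "emeasure (lam_d d) (closure K) \<le> emeasure (lam_d d) ((\<Union>m. A m) \<union> D0_bd d x0)"
    using A null_sets_D0_bd[of d x0] by (intro emeasure_mono sets.Un sets.countable_UN) auto
  moreover have "\<dots> = emeasure (lam_d d) (\<Union>m. A m)"
    using A null_sets_D0_bd[of d x0] by (intro emeasure_Un_null_set sets.countable_UN) auto
  ultimately show "emeasure (lam_d d) (closure K) \<le> emeasure (lam_d d) K" by simp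
qed

lemma closed_slice: "closed K \<Longrightarrow> closed ((\<lambda>y::nat\<Rightarrow>real. y(i := t)) -` K)"
proof (erule closed_vimage)
  show "continuous_on UNIV (\<lambda>y::nat\<Rightarrow>real. y(i := t))"
  proof (rule continuous_on_coordinatewise_then_product)
    fix j show "continuous_on UNIV (\<lambda>y::nat\<Rightarrow>real. (y(i := t)) j)"
      by (cases "j = i") simp_all
  qed
qed

lemma sets_Leb_slice: "closed K \<Longrightarrow> slice d x0 K i \<in> sets (lam_dm1 d i)"
proof -
  assume "closed K"
  then have "closed ((\<lambda>y::nat\<Rightarrow>real. y(i := x0 i)) -` K \<inter> PiE ({..<d} - {i}) (\<lambda>_. UNIV))"
    by (intro closed_Int closed_slice closed_PiE_UNIV)
  moreover have "slice d x0 K i = (\<lambda>y. y(i := x0 i)) -` K \<inter> PiE ({..<d} - {i}) (\<lambda>_. UNIV)"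
    by (auto simp: slice_def)
  ultimately show ?thesis by (auto intro: sets_Leb_closed)
qed

lemma slice_mono: "K \<subseteq> K' \<Longrightarrow> slice d x0 K i \<subseteq> slice d x0 K' i"
  by (auto simp: slice_def)

text \<open>A set of positive measure meets the interior of D0; the OU property then puts the whole
  box between x0 and an interior point into K, whose face at x0 i has positive measure.\<close>
lemma emeasure_slice_pos:
  assumes K: "OU d x0 K" "closed K" and pos: "0 < emeasure (lam_d d) K" and i: "i < d"
  shows "0 < emeasure (lam_dm1 d i) (slice d x0 K i)"
proof -
  have KD: "K \<subseteq> D0 d x0" using K by (simp add: OU_def)
  have "\<not> K \<subseteq> D0_bd d x0"
    using pos null_sets_subset[OF null_sets_D0_bd[of d x0] sets_Leb_closed_subset_D0[OF K(2) KD]]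
    by (metis less_irrefl null_setsD1)
  then obtain x where x: "x \<in> K" "x \<in> D0_int d x0"
    using KD by (auto simp: D0_bd_def)
  let ?P = "PiE ({..<d} - {i}) (\<lambda>j. {x0 j..x j})"
  have "?P \<subseteq> slice d x0 K i"
  proof
    fix y assume y: "y \<in> ?P"
    have "y(i := x0 i) \<in> D0 d x0"
      using y i by (auto simp: D0_def PiE_def Pi_def extensional_def)
    moreover have "\<forall>j<d. (y(i := x0 i)) j \<le> x j"
      using y x(2) by (auto simp: D0_int_def PiE_def Pi_def less_imp_le)
    ultimately show "y \<in> slice d x0 K i"
      using K(1) x(1) y by (auto simp: OU_def slice_def PiE_def Pi_def)
  qed
  have "0 < (\<Prod>j\<in>{..<d} - {i}. ennreal (x j - x0 j))"
    using x(2) by (auto simp: D0_int_def zero_less_iff_neq_zero prod_zero_iff)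
  also have "\<dots> = emeasure (lam_dm1 d i) ?P"
    using x(2) by (intro emeasure_Leb_box[symmetric]) (auto simp: D0_int_def less_imp_le)
  also have "\<dots> \<le> emeasure (lam_dm1 d i) (slice d x0 K i)"
    using \<open>?P \<subseteq> slice d x0 K i\<close> by (intro emeasure_mono sets_Leb_slice K(2))
  finally show ?thesis .
qed

definition unit_cube :: "nat \<Rightarrow> (nat \<Rightarrow> real) \<Rightarrow> (nat \<Rightarrow> real) set" where
  "unit_cube d x0 = PiE {..<d} (\<lambda>j. {x0 j..x0 j + 1})"

lemma closed_unit_cube: "closed (unit_cube d x0)"
proof -
  have "unit_cube d x0 = PiE {..<d} (\<lambda>_. UNIV) \<inter> {x. \<forall>j<d. x0 j \<le> x j \<and> x j \<le> x0 j + 1}"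
    by (auto simp: unit_cube_def PiE_def Pi_def)
  then show ?thesis
    by (simp only:) (intro closed_Int closed_PiE_UNIV closed_Collect_all closed_Collect_imp
        open_Collect_const closed_Collect_conj closed_Collect_le continuous_on_product_coordinates
        continuous_intros)
qed

lemma OU_unit_cube: "OU d x0 (unit_cube d x0)"
  by (force simp: OU_def unit_cube_def D0_def PiE_def Pi_def intro: order_trans)

lemma emeasure_unit_cube: "emeasure (lam_d d) (unit_cube d x0) = 1"
  unfolding unit_cube_def by (subst emeasure_Leb_box) auto

lemma emeasure_slice_unit_cube: "i < d \<Longrightarrow> emeasure (lam_dm1 d i) (slice d x0 (unit_cube d x0) i) = 1"
proof -
  assume "i < d"
  then have "slice d x0 (unit_cube d x0) i = PiE ({..<d} - {i}) (\<lambda>j. {x0 j..x0 j + 1})"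
    by (auto simp: slice_def unit_cube_def PiE_def Pi_def extensional_def split: if_splits)
  then show ?thesis by (simp add: emeasure_Leb_box)
qed

lemma sets_Leb_Bx: "Bx d x0 l h \<in> sets (lam_d d)"
proof (rule sets_Leb_borel)
  have "Bx d x0 l h = D0 d x0 \<inter> {x. \<forall>j<d. l j \<le> x j \<and> ereal (x j) \<le> h j}"
    by (auto simp: Bx_def)
  moreover have "{x::nat\<Rightarrow>real. \<forall>j<d. l j \<le> x j \<and> ereal (x j) \<le> h j} \<in> sets borel"
    by measurable
  ultimately show "Bx d x0 l h \<in> sets borel"
    using borel_closed[OF closed_D0] by auto
  show "Bx d x0 l h \<subseteq> PiE {..<d} (\<lambda>_. UNIV)"
    using D0_subset_PiE by (auto simp: Bx_def)
qed

section \<open>Integrals over the levels\<close>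

lemma borel_measurable_antimono:
  fixes H :: "real \<Rightarrow> ennreal"
  assumes "\<And>s t. s \<le> t \<Longrightarrow> H t \<le> H s"
  shows "H \<in> borel_measurable borel"
proof (rule borel_measurableI_greater)
  fix y
  have "is_interval {x. y < H x}"
    unfolding is_interval_1 using assms by (blast intro: less_le_trans)
  then show "{x \<in> space borel. y < H x} \<in> sets borel"
    by (simp add: real_interval_borel_measurable)
qed

lemma nn_integral_layer_cake:
  assumes "sigma_finite_measure M" and F[measurable]: "F \<in> borel_measurable M"
    and nonneg: "\<And>x. 0 \<le> F x"
  shows "(\<integral>\<^sup>+ x. ennreal (F x) \<partial>M) = (\<integral>\<^sup>+ s\<in>{0<..}. emeasure M {x \<in> space M. s \<le> F x} \<partial>lborel)"
proof -
  interpret M: sigma_finite_measure M by fact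
  interpret pair_sigma_finite M lborel ..
  let ?U = "{(x, s). 0 < s \<and> s \<le> F x}"
  have "(\<integral>\<^sup>+ x. ennreal (F x) \<partial>M) = (\<integral>\<^sup>+ x. (\<integral>\<^sup>+ s. indicator ?U (x, s) \<partial>lborel) \<partial>M)"
  proof (intro nn_integral_cong)
    fix x
    have "(\<integral>\<^sup>+ s. indicator ?U (x, s) \<partial>lborel) = (\<integral>\<^sup>+ s. indicator {0<..F x} s \<partial>lborel)"
      by (intro nn_integral_cong) (auto simp: indicator_def)
    then show "ennreal (F x) = (\<integral>\<^sup>+ s. indicator ?U (x, s) \<partial>lborel)"
      using nonneg[of x] by simp
  qed
  also have "\<dots> = (\<integral>\<^sup>+ s. (\<integral>\<^sup>+ x. indicator ?U (x, s) \<partial>M) \<partial>lborel)"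
  proof (rule Fubini'[symmetric])
    have "?U \<inter> space (M \<Otimes>\<^sub>M lborel) \<in> sets (M \<Otimes>\<^sub>M lborel)" by measurable
    then show "(\<lambda>(x, s). indicator ?U (x, s) :: ennreal) \<in> borel_measurable (M \<Otimes>\<^sub>M lborel)"
      by (simp add: borel_measurable_indicator_iff)
  qed
  also have "\<dots> = (\<integral>\<^sup>+ s\<in>{0<..}. emeasure M {x \<in> space M. s \<le> F x} \<partial>lborel)"
  proof (intro nn_integral_cong)
    fix s :: real
    have "(\<integral>\<^sup>+ x. indicator ?U (x, s) \<partial>M)
        = (\<integral>\<^sup>+ x. indicator {x \<in> space M. s \<le> F x} x * indicator {0<..} s \<partial>M)"
      by (intro nn_integral_cong) (auto simp: indicator_def)
    then show "(\<integral>\<^sup>+ x. indicator ?U (x, s) \<partial>M)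
        = emeasure M {x \<in> space M. s \<le> F x} * indicator {0<..} s"
      by (simp add: nn_integral_multc)
  qed
  finally show ?thesis .
qed

lemma AE_finite_of_nn_set_integral:
  assumes "F \<in> borel_measurable M" and "A \<in> sets M" and "(\<integral>\<^sup>+ s\<in>A. F s \<partial>M) \<noteq> \<infinity>"
  shows "AE s in M. s \<in> A \<longrightarrow> F s \<noteq> \<infinity>"
proof -
  have "AE s in M. F s * indicator A s \<noteq> \<infinity>"
    using assms by (intro nn_integral_noteq_infinite) auto
  then show ?thesis by eventually_elim (auto simp: indicator_def)
qed

section \<open>From a feasible density to a feasible pair\<close>

locale feasible_density =
  fixes d :: nat and x0 :: "nat \<Rightarrow> real" and c :: real and u :: "nat \<Rightarrow> real" and n :: nat
    and lo :: "nat \<Rightarrow> nat \<Rightarrow> real" and hi :: "nat \<Rightarrow> nat \<Rightarrow> ereal" and a b :: "nat \<Rightarrow> real"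
    and f :: "(nat \<Rightarrow> real) \<Rightarrow> real"
  assumes c_pos: "0 < c" and feasible: "feasA d x0 c u n lo hi a b f"
begin

definition level :: "real \<Rightarrow> (nat \<Rightarrow> real) set" where
  "level s = {x \<in> D0 d x0. s \<le> f x}"

definition vol :: "real \<Rightarrow> ennreal" where
  "vol s = emeasure (lam_d d) (Cbar d x0 f s)"

definition face :: "nat \<Rightarrow> real \<Rightarrow> ennreal" where
  "face i s = emeasure (lam_dm1 d i) (slice d x0 (Cbar d x0 f s) i)"

lemma borel_measurable_f: "(\<lambda>x. indicator (D0 d x0) x * f x) \<in> borel_measurable (lam_d d)"
  and f_nonneg: "x \<in> D0 d x0 \<Longrightarrow> 0 \<le> f x"
  and nn_integral_f: "(\<integral>\<^sup>+ x\<in>D0 d x0. ennreal (f x) \<partial>lam_d d) = ennreal c"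
  and f_antimono: "x \<in> D0 d x0 \<Longrightarrow> x' \<in> D0 d x0 \<Longrightarrow> \<forall>j<d. x' j \<le> x j \<Longrightarrow> f x \<le> f x'"
  using feasible by (auto simp: feasA_def set_borel_measurable_def)

lemma Cbar_eq_closure_level: "Cbar d x0 f s = closure (level s)"
  by (simp add: Cbar_def level_def)

lemma OU_level: "OU d x0 (level s)"
  using f_antimono by (auto simp: OU_def level_def intro: order_trans)

lemma sets_level: "level s \<in> sets (lam_d d)"
proof -
  define F where "F x = indicator (D0 d x0) x * f x" for x
  have [measurable]: "F \<in> borel_measurable (lam_d d)"
    unfolding F_def by (fact borel_measurable_f)
  have "level s = D0 d x0 \<inter> {x \<in> space (lam_d d). s \<le> F x}"
    using D0_subset_PiE by (auto simp: level_def F_def space_Leb)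
  moreover have "D0 d x0 \<in> sets (lam_d d)"
    by (rule sets_Leb_closed_subset_D0[OF closed_D0 order_refl])
  ultimately show ?thesis by auto
qed

lemma OU_Cbar: "OU d x0 (Cbar d x0 f s)"
  by (simp add: Cbar_eq_closure_level OU_closure OU_level)

lemma closed_Cbar: "closed (Cbar d x0 f s)"
  by (simp add: Cbar_def)

lemma sets_Cbar: "Cbar d x0 f s \<in> sets (lam_d d)"
  using OU_Cbar closed_Cbar by (intro sets_Leb_closed_subset_D0) (auto simp: OU_def)

lemma Cbar_antimono: "s \<le> t \<Longrightarrow> Cbar d x0 f t \<subseteq> Cbar d x0 f s"
  unfolding Cbar_eq_closure_level by (intro closure_mono) (auto simp: level_def)

lemma borel_measurable_emeasure_Cbar:
  assumes "\<And>s t. s \<le> t \<Longrightarrow> Num (Cbar d x0 f t) \<le> Num (Cbar d x0 f s)"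
  shows "(\<lambda>s. Num (Cbar d x0 f s) :: ennreal) \<in> borel_measurable borel"
  using assms Cbar_antimono by (intro borel_measurable_antimono) auto

lemma borel_measurable_vol[measurable]: "vol \<in> borel_measurable borel"
  unfolding vol_def by (intro borel_measurable_emeasure_Cbar emeasure_mono Cbar_antimono sets_Cbar)

lemma borel_measurable_face[measurable]: "face i \<in> borel_measurable borel"
  unfolding face_def
  by (intro borel_measurable_emeasure_Cbar emeasure_mono slice_mono Cbar_antimono sets_Leb_slice
      closed_Cbar)

lemma nn_integral_vol: "(\<integral>\<^sup>+ s\<in>{0<..}. vol s \<partial>lborel) = ennreal c"
proof -
  define F where "F x = indicator (D0 d x0) x * f x" for x
  have F: "F \<in> borel_measurable (lam_d d)" "\<And>x. 0 \<le> F x"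
    unfolding F_def using borel_measurable_f f_nonneg by (auto simp: indicator_def)
  have "ennreal c = (\<integral>\<^sup>+ x. ennreal (F x) \<partial>lam_d d)"
    unfolding nn_integral_f[symmetric] by (intro nn_integral_cong) (simp add: F_def indicator_def)
  also have "\<dots> = (\<integral>\<^sup>+ s\<in>{0<..}. emeasure (lam_d d) {x \<in> space (lam_d d). s \<le> F x} \<partial>lborel)"
    by (rule nn_integral_layer_cake[OF sigma_finite_measure_Leb F]) simp
  also have "\<dots> = (\<integral>\<^sup>+ s\<in>{0<..}. vol s \<partial>lborel)"
  proof (intro nn_integral_cong)
    fix s :: real
    have "0 < s \<Longrightarrow> {x \<in> space (lam_d d). s \<le> F x} = level s"
      using D0_subset_PiE by (auto simp: F_def level_def indicator_def space_Leb)
    then show "emeasure (lam_d d) {x \<in> space (lam_d d). s \<le> F x} * indicator {0<..} s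
        = vol s * indicator {0<..} s"
      by (cases "0 < s")
        (simp_all add: vol_def Cbar_eq_closure_level emeasure_closure_OU[OF OU_level sets_level])
  qed
  finally show ?thesis ..
qed

text \<open>Levels at which Cbar d x0 f s is admissible in problem (B).\<close>
definition regular :: "real \<Rightarrow> bool" where
  "regular s \<longleftrightarrow> 0 < vol s \<and> vol s < \<infinity> \<and> (\<forall>i<d. face i s < \<infinity>)"

lemma pred_regular[measurable]: "Measurable.pred borel regular"
  unfolding regular_def by measurable

lemma AE_regular: "AE s in lborel. 0 < s \<longrightarrow> vol s \<noteq> 0 \<longrightarrow> regular s"
proof -
  have "AE s in lborel. 0 < s \<longrightarrow> vol s \<noteq> \<infinity>"
    using AE_finite_of_nn_set_integral[of vol lborel "{0<..}"] nn_integral_vol by simp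
  moreover have "AE s in lborel. 0 < s \<longrightarrow> face i s / vol s * (vol s / ennreal c) \<noteq> \<infinity>"
    if "i < d" for i
  proof -
    have "(\<integral>\<^sup>+ s\<in>{0<..}. face i s / vol s * (vol s / ennreal c) \<partial>lborel) \<le> ennreal (u i / c)"
      using feasible that by (simp add: feasA_def Let_def vol_def face_def)
    then show ?thesis
      using AE_finite_of_nn_set_integral[of "\<lambda>s. face i s / vol s * (vol s / ennreal c)" lborel "{0<..}"]
      by (simp add: neq_top_trans[OF ennreal_neq_top])
  qed
  then have "AE s in lborel. \<forall>i\<in>{..<d}. 0 < s \<longrightarrow> face i s / vol s * (vol s / ennreal c) \<noteq> \<infinity>"
    by (intro eventually_ball_finite) auto
  ultimately show ?thesis
  proof eventually_elim
    case (elim s)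
    text \<open>With 0 < vol s < \<infinity>, an infinite face would make the integrand of a constraint infinite.\<close>
    have "face i s < \<infinity>" if "0 < s" "vol s \<noteq> 0" "i < d" for i
    proof (rule ccontr)
      assume "\<not> face i s < \<infinity>"
      then have "face i s / vol s = \<infinity>"
        using elim(1) that by (simp add: ennreal_top_divide top.not_eq_extremum[symmetric])
      moreover have "vol s / ennreal c \<noteq> 0" using that by (simp add: ennreal_divide_eq_0_iff)
      ultimately have "face i s / vol s * (vol s / ennreal c) = \<infinity>"
        by (simp add: ennreal_mult_eq_top_iff)
      then show False using elim(2) that by auto
    qed
    then show ?case using elim by (auto simp: regular_def top.not_eq_extremum zero_less_iff_neq_zero)
  qed
qed

definition R :: "real \<Rightarrow> (nat \<Rightarrow> real) set" where
  "R s = (if regular s then Cbar d x0 f s else unit_cube d x0)"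

definition G :: "real measure" where
  "G = density (restrict_space lborel {0<..}) (\<lambda>s. vol s / ennreal c)"

lemma space_G: "space G = {0<..}"
  by (simp add: G_def space_restrict_space)

lemma sets_G: "sets G = sets (restrict_space borel {0<..})"
  by (simp add: G_def sets_restrict_space)

lemma borel_measurable_G: "h \<in> borel_measurable borel \<Longrightarrow> h \<in> borel_measurable G"
  by (subst measurable_cong_sets[OF sets_G refl]) (erule measurable_restrict_space1)

lemma nn_integral_G:
  assumes "h \<in> borel_measurable borel"
  shows "(\<integral>\<^sup>+ s. h s \<partial>G) = (\<integral>\<^sup>+ s\<in>{0<..}. vol s / ennreal c * h s \<partial>lborel)"
proof -
  have "(\<lambda>s. vol s / ennreal c) \<in> borel_measurable (restrict_space lborel {0<..})"
    "h \<in> borel_measurable (restrict_space lborel {0<..})"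
    using assms by (auto intro!: measurable_restrict_space1)
  then show ?thesis
    by (simp add: G_def nn_integral_density nn_integral_restrict_space mult.assoc)
qed

lemma prob_space_G: "prob_space G"
proof
  have "emeasure G (space G) = (\<integral>\<^sup>+ s. 1 \<partial>G)" by simp
  also have "\<dots> = (\<integral>\<^sup>+ s\<in>{0<..}. vol s / ennreal c * 1 \<partial>lborel)"
    by (rule nn_integral_G) simp
  also have "\<dots> = (\<integral>\<^sup>+ s. (vol s * indicator {0<..} s) / ennreal c \<partial>lborel)"
    by (intro nn_integral_cong) (simp add: divide_ennreal_def mult_ac)
  also have "\<dots> = (\<integral>\<^sup>+ s\<in>{0<..}. vol s \<partial>lborel) / ennreal c"
    by (rule nn_integral_divide) simp
  also have "\<dots> = 1" using nn_integral_vol c_pos by simp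
  finally show "emeasure G (space G) = 1" .
qed

lemma admissible_R:
  assumes "0 < s"
  shows "closed (R s) \<and> OU d x0 (R s) \<and> 0 < emeasure (lam_d d) (R s) \<and> emeasure (lam_d d) (R s) < \<infinity> \<and>
    (\<forall>i<d. 0 < emeasure (lam_dm1 d i) (slice d x0 (R s) i) \<and>
           emeasure (lam_dm1 d i) (slice d x0 (R s) i) < \<infinity>)"
proof (cases "regular s")
  case True
  then show ?thesis
    using emeasure_slice_pos[OF OU_Cbar closed_Cbar]
    by (auto simp: R_def regular_def vol_def face_def closed_Cbar OU_Cbar)
qed (simp add: R_def closed_unit_cube OU_unit_cube emeasure_unit_cube emeasure_slice_unit_cube)

text \<open>Every ratio integrated in problem (B) against the pair (R, G) equals its counterpart in problem
  (A): off regular levels the weight vol s vanishes almost everywhere.\<close>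
lemma ratio_R_measurable_and_integral:
  assumes Num: "(\<lambda>s. Num (Cbar d x0 f s)) \<in> borel_measurable borel"
  shows "(\<lambda>s. Num (R s) / emeasure (lam_d d) (R s)) \<in> borel_measurable G"
    and "(\<integral>\<^sup>+ s. Num (R s) / emeasure (lam_d d) (R s) \<partial>G)
       = (\<integral>\<^sup>+ s\<in>{0<..}. Num (Cbar d x0 f s) / vol s * (vol s / ennreal c) \<partial>lborel)"
proof -
  have eq: "(\<lambda>s. Num (R s) / emeasure (lam_d d) (R s))
      = (\<lambda>s. if regular s then Num (Cbar d x0 f s) / vol s else Num (unit_cube d x0))"
    by (auto simp: R_def vol_def emeasure_unit_cube fun_eq_iff divide_ennreal_def)
  have meas: "(\<lambda>s. Num (R s) / emeasure (lam_d d) (R s)) \<in> borel_measurable borel"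
    unfolding eq using Num by measurable
  then show "(\<lambda>s. Num (R s) / emeasure (lam_d d) (R s)) \<in> borel_measurable G"
    by (rule borel_measurable_G)
  show "(\<integral>\<^sup>+ s. Num (R s) / emeasure (lam_d d) (R s) \<partial>G)
      = (\<integral>\<^sup>+ s\<in>{0<..}. Num (Cbar d x0 f s) / vol s * (vol s / ennreal c) \<partial>lborel)"
    unfolding nn_integral_G[OF meas]
    by (intro nn_integral_cong_AE, use AE_regular in eventually_elim)
      (auto simp: R_def vol_def indicator_def mult.commute)
qed

lemma borel_measurable_emeasure_Int_Cbar:
  assumes "A \<in> sets (lam_d d)"
  shows "(\<lambda>s. emeasure (lam_d d) (A \<inter> Cbar d x0 f s)) \<in> borel_measurable borel"
  by (intro borel_measurable_emeasure_Cbar emeasure_mono Int_mono order_refl Cbar_antimono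
      sets.Int sets_Cbar assms)

lemma feasB_R_G:
  assumes "S \<in> sets (lam_d d)"
  shows "feasB d x0 c u n lo hi a b S R G"
proof -
  have F: "(\<lambda>s. emeasure (lam_dm1 d i) (slice d x0 (Cbar d x0 f s) i)) \<in> borel_measurable borel" for i
    using borel_measurable_face[of i] unfolding face_def .
  show ?thesis
    using feasible prob_space_G space_G sets_G admissible_R
      ratio_R_measurable_and_integral[OF borel_measurable_emeasure_Int_Cbar[OF assms]]
      ratio_R_measurable_and_integral[OF borel_measurable_emeasure_Int_Cbar[OF sets_Leb_Bx]]
      ratio_R_measurable_and_integral[OF F]
    by (simp add: feasB_def feasA_def Let_def vol_def)
qed

lemma objB_R_G: "S \<in> sets (lam_d d) \<Longrightarrow> objB d c S R G = objA d x0 c S f"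
  using ratio_R_measurable_and_integral(2)[OF borel_measurable_emeasure_Int_Cbar]
  by (simp add: objB_def objA_def vol_def)

end

theorem mainTheorem5:
  fixes d n :: nat and x0 :: "nat \<Rightarrow> real" and c :: real and u a b :: "nat \<Rightarrow> real"
    and lo :: "nat \<Rightarrow> nat \<Rightarrow> real" and hi :: "nat \<Rightarrow> nat \<Rightarrow> ereal"
    and S :: "(nat \<Rightarrow> real) set"
  assumes "1 \<le> d"
    and "x0 \<in> PiE {..<d} (\<lambda>_. UNIV)"
    and "0 < c"
    and "\<forall>i<d. 0 \<le> u i"
    and "\<forall>i<n. 0 \<le> a i \<and> a i \<le> b i \<and> b i \<le> 1"
    and "\<forall>i<n. \<forall>j<d. x0 j \<le> lo i j \<and> ereal (lo i j) \<le> hi i j"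
    and "S \<subseteq> D0 d x0" and "S \<in> sets (lam_d d)"
  shows "optA d x0 c u n lo hi a b S \<le> optB d x0 c u n lo hi a b S"
  unfolding optA_def optB_def
proof (rule Sup_subset_mono, safe)
  fix f assume "feasA d x0 c u n lo hi a b f"
  then interpret feasible_density d x0 c u n lo hi a b f
    using \<open>0 < c\<close> by unfold_locales
  show "\<exists>R' G'. enn2ereal (objA d x0 c S f) = enn2ereal (objB d c S R' G') \<and>
      feasB d x0 c u n lo hi a b S R' G'"
    using feasB_R_G objB_R_G \<open>S \<in> sets (lam_d d)\<close> by metis
qed

end
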